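(* Let $\delta\le\frac14$ and let $\mathcal{I}$ be a $\delta$-ONI instance with $n$ agents and $|N^1_1|\le n\left(\frac14-\delta\right)/\left(\frac14+\frac\delta3\right)$. Then every agent $i\in N^1_2$ receives a bag of value at least $\left(\frac34+\delta\right)\mathrm{MMS}_i$ at the end of Algorithm $\mathtt{approxMMS1}(\mathcal{I},\delta)$.
   Context: Instance: agents $[n]$, goods $[m]$, additive valuations; goods with index larger than $m$ are dummy goods of value 0; $\mathrm{MMS}_i$ is the max over partitions of the goods into $n$ bundles of the minimum bundle value for $i$. Ordered: $v_i(1)\ge\dots\ge v_i(m)$ for all $i$. Normalized: every agent $i$ has an MMS partition with all $n$ bundles of value exactly 1 to $i$. $\alpha$-irreducible: for every $i$, $v_i(1)<\alpha$, $v_i(\{2n-1,2n,2n+1\})<\alpha$, $v_i(\{3n-2,\dots,3n+1\})<\alpha$, $v_i(\{1,2n+1\})<\alpha$. $\delta$-ONI: ordered, normalized, $(3/4+\delta)$-irreducible. $B_k=\{k,2n-k+1\}$ ($k\in[n]$); $N^1=\{i:v_i(B_k)\le1\ \forall k\}$; $N^1_1=\{i\in N^1:v_i(2n+1)\ge\frac14-5\delta\}$; $N^1_2=N^1\setminus N^1_1$. Algorithm $\mathtt{approxMMS1}(\mathcal{I},\delta)$: $\alpha=3/4+\delta$, bags $B_1,\dots,B_n$. Phase 1: while some unassigned agent $i$ and unassigned bag $B$ have $v_i(B)\ge\alpha$, assign such $B$ to an agent valuing it at least $\alpha$, choosing an agent of $N^1_1$ whenever one qualifies. Phase 2: process remaining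 bags one by one; for the current bag $B$, while no unassigned agent values it at least $\alpha$, add an arbitrary unused good with index $>2n$; then assign $B$ to an unassigned agent valuing it at least $\alpha$, preferring $N^1_1$. (If a good must be added but none is left, the algorithm stops.) *)

theory Defs
  imports Complex_Main "HOL-Library.FuncSet"
begin

text \<open>Agents are 1..n, goods are 1..m; v i j is the value of good j for agent i.
  Goods with index outside 1..m are dummy goods of value 0.\<close>

definition gval :: "nat \<Rightarrow> (nat \<Rightarrow> nat \<Rightarrow> real) \<Rightarrow> nat \<Rightarrow> nat \<Rightarrow> real" where
  "gval m v i j = (if j \<in> {1..m} then v i j else 0)"

definition bval :: "nat \<Rightarrow> (nat \<Rightarrow> nat \<Rightarrow> real) \<Rightarrow> nat \<Rightarrow> nat set \<Rightarrow> real" where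
  "bval m v i S = (\<Sum>j\<in>S. gval m v i j)"

text \<open>A partition of the goods 1..m into n bundles 1..n is a map f from goods to bundles.\<close>
definition MMS :: "nat \<Rightarrow> nat \<Rightarrow> (nat \<Rightarrow> nat \<Rightarrow> real) \<Rightarrow> nat \<Rightarrow> real" where
  "MMS n m v i = Max ((\<lambda>f. Min ((\<lambda>k. bval m v i {j\<in>{1..m}. f j = k}) ` {1..n}))
                        ` ({1..m} \<rightarrow>\<^sub>E {1..n}))"

definition ordered_inst :: "nat \<Rightarrow> nat \<Rightarrow> (nat \<Rightarrow> nat \<Rightarrow> real) \<Rightarrow> bool" where
  "ordered_inst n m v \<longleftrightarrow> (\<forall>i\<in>{1..n}. \<forall>j\<in>{1..<m}. v i j \<ge> v i (Suc j))"

definition normalized_inst :: "nat \<Rightarrow> nat \<Rightarrow> (nat \<Rightarrow> nat \<Rightarrow> real) \<Rightarrow> bool" where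
  "normalized_inst n m v \<longleftrightarrow> (\<forall>i\<in>{1..n}. \<exists>f\<in>{1..m} \<rightarrow>\<^sub>E {1..n}.
      Min ((\<lambda>k. bval m v i {j\<in>{1..m}. f j = k}) ` {1..n}) = MMS n m v i \<and>
      (\<forall>k\<in>{1..n}. bval m v i {j\<in>{1..m}. f j = k} = 1))"

definition irreducible_inst :: "real \<Rightarrow> nat \<Rightarrow> nat \<Rightarrow> (nat \<Rightarrow> nat \<Rightarrow> real) \<Rightarrow> bool" where
  "irreducible_inst a n m v \<longleftrightarrow> (\<forall>i\<in>{1..n}.
      gval m v i 1 < a \<and>
      bval m v i {2*n-1, 2*n, 2*n+1} < a \<and>
      bval m v i {3*n-2..3*n+1} < a \<and>
      bval m v i {1, 2*n+1} < a)"

definition ONI :: "real \<Rightarrow> nat \<Rightarrow> nat \<Rightarrow> (nat \<Rightarrow> nat \<Rightarrow> real) \<Rightarrow> bool" where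
  "ONI \<delta> n m v \<longleftrightarrow> ordered_inst n m v \<and> normalized_inst n m v \<and>
      irreducible_inst (3/4 + \<delta>) n m v"

definition Bk :: "nat \<Rightarrow> nat \<Rightarrow> nat set" where
  "Bk n k = {k, 2*n - k + 1}"

definition N1 :: "nat \<Rightarrow> nat \<Rightarrow> (nat \<Rightarrow> nat \<Rightarrow> real) \<Rightarrow> nat set" where
  "N1 n m v = {i\<in>{1..n}. \<forall>k\<in>{1..n}. bval m v i (Bk n k) \<le> 1}"

definition N11 :: "real \<Rightarrow> nat \<Rightarrow> nat \<Rightarrow> (nat \<Rightarrow> nat \<Rightarrow> real) \<Rightarrow> nat set" where
  "N11 \<delta> n m v = {i\<in>N1 n m v. gval m v i (2*n+1) \<ge> 1/4 - 5*\<delta>}"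

definition N12 :: "real \<Rightarrow> nat \<Rightarrow> nat \<Rightarrow> (nat \<Rightarrow> nat \<Rightarrow> real) \<Rightarrow> nat set" where
  "N12 \<delta> n m v = N1 n m v - N11 \<delta> n m v"

text \<open>States of algorithm approxMMS1: phase flag, bag currently processed in phase 2,
  assignment of agents to bags, contents of bags.\<close>
record alg_state =
  ph2 :: bool
  cur :: "nat option"
  asg :: "nat \<Rightarrow> nat option"
  bags :: "nat \<Rightarrow> nat set"

definition unassigned_agent :: "nat \<Rightarrow> alg_state \<Rightarrow> nat \<Rightarrow> bool" where
  "unassigned_agent n s i \<longleftrightarrow> i \<in> {1..n} \<and> asg s i = None"

definition unassigned_bag :: "nat \<Rightarrow> alg_state \<Rightarrow> nat \<Rightarrow> bool" where
  "unassigned_bag n s k \<longleftrightarrow> k \<in> {1..n} \<and> (\<forall>i\<in>{1..n}. asg s i \<noteq> Some k)"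

definition may_receive :: "real \<Rightarrow> nat \<Rightarrow> nat \<Rightarrow> (nat \<Rightarrow> nat \<Rightarrow> real) \<Rightarrow> alg_state \<Rightarrow> nat \<Rightarrow> nat \<Rightarrow> bool" where
  "may_receive \<delta> n m v s i k \<longleftrightarrow>
     unassigned_agent n s i \<and> bval m v i (bags s k) \<ge> 3/4 + \<delta> \<and>
     (i \<notin> N11 \<delta> n m v \<longrightarrow>
        \<not> (\<exists>i'\<in>N11 \<delta> n m v. unassigned_agent n s i' \<and> bval m v i' (bags s k) \<ge> 3/4 + \<delta>))"

inductive alg_step :: "real \<Rightarrow> nat \<Rightarrow> nat \<Rightarrow> (nat \<Rightarrow> nat \<Rightarrow> real) \<Rightarrow> alg_state \<Rightarrow> alg_state \<Rightarrow> bool"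
  for \<delta> n m v where
  phase1_assign:
    "\<lbrakk>\<not> ph2 s; unassigned_bag n s k; may_receive \<delta> n m v s i k\<rbrakk>
     \<Longrightarrow> alg_step \<delta> n m v s (s\<lparr>asg := (asg s)(i := Some k)\<rparr>)"
| phase1_end:
    "\<lbrakk>\<not> ph2 s; \<not> (\<exists>i k. unassigned_agent n s i \<and> unassigned_bag n s k \<and>
                          bval m v i (bags s k) \<ge> 3/4 + \<delta>)\<rbrakk>
     \<Longrightarrow> alg_step \<delta> n m v s (s\<lparr>ph2 := True\<rparr>)"
| phase2_select:
    "\<lbrakk>ph2 s; cur s = None; unassigned_bag n s k\<rbrakk>
     \<Longrightarrow> alg_step \<delta> n m v s (s\<lparr>cur := Some k\<rparr>)"
| phase2_add:
    "\<lbrakk>ph2 s; cur s = Some k;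
      \<not> (\<exists>i. unassigned_agent n s i \<and> bval m v i (bags s k) \<ge> 3/4 + \<delta>);
      g \<in> {2*n+1..m}; \<forall>k'\<in>{1..n}. g \<notin> bags s k'\<rbrakk>
     \<Longrightarrow> alg_step \<delta> n m v s (s\<lparr>bags := (bags s)(k := insert g (bags s k))\<rparr>)"
| phase2_assign:
    "\<lbrakk>ph2 s; cur s = Some k; may_receive \<delta> n m v s i k\<rbrakk>
     \<Longrightarrow> alg_step \<delta> n m v s (s\<lparr>asg := (asg s)(i := Some k), cur := None\<rparr>)"

definition alg_init :: "nat \<Rightarrow> alg_state" where
  "alg_init n = \<lparr>ph2 = False, cur = None, asg = (\<lambda>_. None),
                 bags = (\<lambda>k. if k \<in> {1..n} then Bk n k else {})\<rparr>"

text \<open>Final states of (any run of) approxMMS1: reachable states with no further step,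
  including states where the algorithm stops because no good is left to add.\<close>
definition alg_final :: "real \<Rightarrow> nat \<Rightarrow> nat \<Rightarrow> (nat \<Rightarrow> nat \<Rightarrow> real) \<Rightarrow> alg_state \<Rightarrow> bool" where
  "alg_final \<delta> n m v s \<longleftrightarrow> (alg_step \<delta> n m v)\<^sup>*\<^sup>* (alg_init n) s \<and> \<not> (\<exists>s'. alg_step \<delta> n m v s s')"

end

theory Submission
  imports Defs
begin

text \<open>Fix an agent i of N12 and let alpha = 3/4 + delta. As long as i is unassigned, every
  bag is worth at most 1 to i: initially because i is in N1, and later because a good is only
  added to a bag worth less than alpha to i, and every good added has index beyond 2n, hence is
  worth at most v_i(2n+1), where alpha + v_i(2n+1) <= 1 since i is not in N11. If i were
  unassigned in a final state, the algorithm would be stuck in phase 2 with all goods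
  distributed and the current bag worth less than alpha <= 1 to i. The n bags would then be
  worth less than n to i in total, contradicting normalization.\<close>

lemma sum_UN_le:
  fixes f :: "'b \<Rightarrow> 'c::ordered_comm_monoid_add"
  assumes "finite K" "\<And>k. k \<in> K \<Longrightarrow> finite (B k)" "\<And>x. 0 \<le> f x"
  shows "sum f (\<Union>k\<in>K. B k) \<le> (\<Sum>k\<in>K. sum f (B k))"
proof -
  have "sum f (\<Union>k\<in>K. B k) = sum f (snd ` (SIGMA k:K. B k))"
    by (rule arg_cong[where f = "sum f"]) force
  also have "\<dots> \<le> sum (f \<circ> snd) (SIGMA k:K. B k)"
    using assms by (intro sum_image_le finite_SigmaI) auto
  also have "\<dots> = (\<Sum>k\<in>K. sum f (B k))"
    using assms by (simp add: sum.Sigma split_def)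
  finally show ?thesis .
qed

lemma Bk_cover: "{1..2*n} \<subseteq> (\<Union>k\<in>{1..n}. Bk n k)"
proof
  fix j assume j: "j \<in> {1..2*n}"
  show "j \<in> (\<Union>k\<in>{1..n}. Bk n k)"
  proof (cases "j \<le> n")
    case True
    then show ?thesis using j by (auto simp: Bk_def)
  next
    case False
    then have "j \<in> Bk n (2*n - j + 1)" "2*n - j + 1 \<in> {1..n}" using j by (auto simp: Bk_def)
    then show ?thesis by blast
  qed
qed

lemma exists_unassigned_bag:
  assumes "i \<in> {1..n}" "asg s i = None"
  shows "\<exists>k. unassigned_bag n s k"
proof (rule ccontr)
  assume "\<nexists>k. unassigned_bag n s k"
  then have "{1..n} \<subseteq> (\<lambda>j. the (asg s j)) ` ({1..n} - {i})"
    using assms(2) by (force simp: unassigned_bag_def)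
  then have "card {1..n} \<le> card ({1..n} - {i})"
    by (meson card_image_le card_mono finite_Diff finite_atLeastAtMost finite_imageI le_trans)
  then show False using assms(1) by (simp, linarith)
qed

lemma may_receive_exists:
  assumes "unassigned_agent n s i" "3/4 + \<delta> \<le> bval m v i (bags s k)"
  shows "\<exists>i'. may_receive \<delta> n m v s i' k"
  using assms unfolding may_receive_def by blast

abbreviation alg_reachable :: "real \<Rightarrow> nat \<Rightarrow> nat \<Rightarrow> (nat \<Rightarrow> nat \<Rightarrow> real) \<Rightarrow> alg_state \<Rightarrow> bool" where
  "alg_reachable \<delta> n m v \<equiv> (alg_step \<delta> n m v)\<^sup>*\<^sup>* (alg_init n)"

lemma alg_step_asg_None:
  assumes "alg_step \<delta> n m v s s'" "asg s' i = None"
  shows "asg s i = None"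
  using assms by cases (auto split: if_splits)

lemma alg_step_bags:
  assumes "alg_step \<delta> n m v s s'"
  obtains "bags s' = bags s"
  | k g where "cur s = Some k" "g \<in> {2*n+1..m}"
      "\<nexists>i. unassigned_agent n s i \<and> 3/4 + \<delta> \<le> bval m v i (bags s k)"
      "bags s' = (bags s)(k := insert g (bags s k))"
  using assms by cases auto

lemma alg_reachable_bags:
  assumes "alg_reachable \<delta> n m v s"
  shows "finite (bags s k) \<and> (k \<in> {1..n} \<longrightarrow> Bk n k \<subseteq> bags s k)"
  using assms
proof (induction rule: rtranclp_induct)
  case base
  then show ?case by (simp add: alg_init_def Bk_def)
next
  case (step s s')
  from step.hyps(2) show ?case by (cases rule: alg_step_bags) (use step.IH in auto)
qed

definition cur_bag_ok :: "nat \<Rightarrow> alg_state \<Rightarrow> bool" where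
  "cur_bag_ok n s \<longleftrightarrow> (\<not> ph2 s \<longrightarrow> cur s = None) \<and> (\<forall>k. cur s = Some k \<longrightarrow> unassigned_bag n s k)"

lemma alg_reachable_cur_bag_ok:
  assumes "alg_reachable \<delta> n m v s"
  shows "cur_bag_ok n s"
  using assms
proof (induction rule: rtranclp_induct)
  case base
  then show ?case by (simp add: alg_init_def cur_bag_ok_def)
next
  case (step s s')
  from step.hyps(2) show ?case
  proof cases
    case (phase1_assign k i)
    then show ?thesis using step.IH by (simp add: cur_bag_ok_def)
  next
    case phase1_end
    then show ?thesis using step.IH by (simp add: cur_bag_ok_def)
  next
    case (phase2_select k)
    then show ?thesis by (simp add: cur_bag_ok_def unassigned_bag_def)
  next
    case (phase2_add k g)
    then show ?thesis using step.IH by (simp add: cur_bag_ok_def unassigned_bag_def)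
  next
    case (phase2_assign k i)
    then show ?thesis by (simp add: cur_bag_ok_def)
  qed
qed

lemma alg_step_asg:
  assumes "alg_step \<delta> n m v s s'" "cur_bag_ok n s"
  obtains "asg s' = asg s"
  | k i where "unassigned_bag n s k" "may_receive \<delta> n m v s i k"
      "asg s' = (asg s)(i := Some k)" "bags s' = bags s"
  using assms by cases (auto simp: cur_bag_ok_def)

lemma alg_reachable_assigned_bag:
  assumes "alg_reachable \<delta> n m v s" "i \<in> {1..n}" "asg s i = Some k"
  shows "k \<in> {1..n} \<and> 3/4 + \<delta> \<le> bval m v i (bags s k)"
  using assms
proof (induction arbitrary: i k rule: rtranclp_induct)
  case base
  then show ?case by (simp add: alg_init_def)
next
  case (step s s')
  have cur: "cur_bag_ok n s" using step.hyps(1) by (rule alg_reachable_cur_bag_ok)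
  have earlier_assignment: ?case if "asg s i = Some k"
  proof -
    from step.hyps(2) have "bags s' k = bags s k"
    proof (cases rule: alg_step_bags)
      case (2 k' g)
      then have "k \<noteq> k'"
        using cur that step.prems(1) by (auto simp: cur_bag_ok_def unassigned_bag_def)
      with 2 show ?thesis by simp
    qed simp
    then show ?thesis using step.IH[OF step.prems(1) that] by simp
  qed
  from step.hyps(2) cur show ?case
  proof (cases rule: alg_step_asg)
    case 1
    then show ?thesis using earlier_assignment step.prems(2) by simp
  next
    case (2 k' i')
    show ?thesis
    proof (cases "i = i'")
      case True
      then show ?thesis using 2 step.prems(2) by (simp add: unassigned_bag_def may_receive_def)
    next
      case False
      then show ?thesis using 2 earlier_assignment step.prems(2) by simp
    qed
  qed
qed

lemma alg_final_unassigned_agent: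
  assumes final: "alg_final \<delta> n m v s" and i: "unassigned_agent n s i"
  shows "\<exists>k\<in>{1..n}. bval m v i (bags s k) < 3/4 + \<delta> \<and> {1..m} \<subseteq> (\<Union>k\<in>{1..n}. bags s k)"
proof -
  have reach: "alg_reachable \<delta> n m v s" and stuck: "\<nexists>s'. alg_step \<delta> n m v s s'"
    using final by (auto simp: alg_final_def)
  have cur: "cur_bag_ok n s" using reach by (rule alg_reachable_cur_bag_ok)
  have ph2: "ph2 s"
  proof (rule ccontr)
    assume ph1: "\<not> ph2 s"
    show False
    proof (cases "\<exists>i k. unassigned_agent n s i \<and> unassigned_bag n s k \<and> 3/4 + \<delta> \<le> bval m v i (bags s k)")
      case True
      then obtain i' k where "unassigned_bag n s k" "may_receive \<delta> n m v s i' k"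
        using may_receive_exists by blast
      then show False using stuck alg_step.phase1_assign[OF ph1] by blast
    next
      case False
      then show False using stuck alg_step.phase1_end[OF ph1] by blast
    qed
  qed
  obtain k where k: "cur s = Some k"
  proof (cases "cur s")
    case None
    have "\<exists>k. unassigned_bag n s k" using i by (intro exists_unassigned_bag) (auto simp: unassigned_agent_def)
    then show ?thesis using stuck alg_step.phase2_select[OF ph2 None] by blast
  qed
  have kn: "k \<in> {1..n}" using cur k by (simp add: cur_bag_ok_def unassigned_bag_def)
  have unwanted: "\<nexists>i. unassigned_agent n s i \<and> 3/4 + \<delta> \<le> bval m v i (bags s k)"
  proof
    assume "\<exists>i. unassigned_agent n s i \<and> 3/4 + \<delta> \<le> bval m v i (bags s k)"
    then obtain i' where "may_receive \<delta> n m v s i' k" using may_receive_exists by blast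
    then show False using stuck alg_step.phase2_assign[OF ph2 k] by blast
  qed
  have used: "\<exists>k'\<in>{1..n}. g \<in> bags s k'" if "g \<in> {2*n+1..m}" for g
    using stuck alg_step.phase2_add[OF ph2 k unwanted that] by blast
  have "{1..m} \<subseteq> (\<Union>k\<in>{1..n}. bags s k)"
  proof
    fix j assume j: "j \<in> {1..m}"
    show "j \<in> (\<Union>k\<in>{1..n}. bags s k)"
    proof (cases "j \<le> 2*n")
      case True
      then have "j \<in> {1..2*n}" using j by simp
      then have "j \<in> (\<Union>k\<in>{1..n}. Bk n k)" using Bk_cover by blast
      then show ?thesis using alg_reachable_bags[OF reach] by blast
    next
      case False
      then show ?thesis using used j by auto
    qed
  qed
  moreover have "bval m v i (bags s k) < 3/4 + \<delta>" using unwanted i by auto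
  ultimately show ?thesis using kn by blast
qed

locale ONI_instance =
  fixes \<delta> :: real and n m :: nat and v :: "nat \<Rightarrow> nat \<Rightarrow> real"
  assumes nonneg: "\<forall>i\<in>{1..n}. \<forall>j\<in>{1..m}. v i j \<ge> 0"
    and ONI: "ONI \<delta> n m v"
begin

lemma gval_nonneg: "i \<in> {1..n} \<Longrightarrow> 0 \<le> gval m v i j"
  using nonneg by (simp add: gval_def)

lemma gval_antimono:
  assumes i: "i \<in> {1..n}" and "1 \<le> j" "j \<le> j'"
  shows "gval m v i j' \<le> gval m v i j"
  using \<open>j \<le> j'\<close>
proof (induction j' rule: dec_induct)
  case base
  then show ?case by simp
next
  case (step l)
  have "gval m v i (Suc l) \<le> gval m v i l"
  proof (cases "Suc l \<le> m")
    case True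
    then show ?thesis
      using ONI i step.hyps(1) \<open>1 \<le> j\<close> by (simp add: ONI_def ordered_inst_def gval_def)
  next
    case False
    then show ?thesis using gval_nonneg[OF i] by (simp add: gval_def)
  qed
  then show ?case using step.IH by simp
qed

lemma bval_insert_le:
  assumes "i \<in> {1..n}" "finite B"
  shows "bval m v i (insert g B) \<le> bval m v i B + gval m v i g"
  using assms gval_nonneg by (simp add: bval_def sum.insert_if)

lemma MMS_eq_1:
  assumes i: "i \<in> {1..n}"
  shows "MMS n m v i = 1"
proof -
  obtain f where f: "Min ((\<lambda>k. bval m v i {j\<in>{1..m}. f j = k}) ` {1..n}) = MMS n m v i"
    "\<forall>k\<in>{1..n}. bval m v i {j\<in>{1..m}. f j = k} = 1"
    using ONI i unfolding ONI_def normalized_inst_def by blast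
  have "(\<lambda>k. bval m v i {j\<in>{1..m}. f j = k}) ` {1..n} = {1}" using f(2) i by auto
  then show ?thesis using f(1) by simp
qed

lemma bval_all_goods:
  assumes i: "i \<in> {1..n}"
  shows "bval m v i {1..m} = real n"
proof -
  obtain f where f: "f \<in> {1..m} \<rightarrow>\<^sub>E {1..n}" "\<forall>k\<in>{1..n}. bval m v i {j\<in>{1..m}. f j = k} = 1"
    using ONI i unfolding ONI_def normalized_inst_def by blast
  have "bval m v i {1..m} = (\<Sum>k\<in>{1..n}. bval m v i {j\<in>{1..m}. f j = k})"
    unfolding bval_def using f(1) by (subst sum.group[symmetric]) auto
  also have "\<dots> = real n" using f(2) by simp
  finally show ?thesis .
qed

lemma n_le_sum_bval_cover:
  assumes i: "i \<in> {1..n}" and fin: "\<And>k. k \<in> {1..n} \<Longrightarrow> finite (B k)"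
    and cover: "{1..m} \<subseteq> (\<Union>k\<in>{1..n}. B k)"
  shows "real n \<le> (\<Sum>k\<in>{1..n}. bval m v i (B k))"
proof -
  have "real n = bval m v i {1..m}" using bval_all_goods[OF i] by simp
  also have "\<dots> \<le> bval m v i (\<Union>k\<in>{1..n}. B k)"
    unfolding bval_def using cover fin gval_nonneg[OF i] by (intro sum_mono2) auto
  also have "\<dots> \<le> (\<Sum>k\<in>{1..n}. bval m v i (B k))"
    unfolding bval_def using fin gval_nonneg[OF i] by (intro sum_UN_le) auto
  finally show ?thesis .
qed

lemma N12_threshold_plus_gval_le_1:
  assumes "i \<in> N12 \<delta> n m v"
  shows "3/4 + \<delta> + gval m v i (2*n+1) \<le> 1"
proof -
  have i: "i \<in> {1..n}" and small: "gval m v i (2*n+1) < 1/4 - 5*\<delta>"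
    using assms unfolding N12_def N11_def N1_def by auto
  have "bval m v i {2*n-1, 2*n, 2*n+1} < 3/4 + \<delta>"
    using ONI i unfolding ONI_def irreducible_inst_def by auto
  moreover have "2*n-1 \<notin> {2*n, 2*n+1}" using i by auto
  then have "bval m v i {2*n-1, 2*n, 2*n+1} = gval m v i (2*n-1) + gval m v i (2*n) + gval m v i (2*n+1)"
    by (simp add: bval_def add.assoc)
  moreover have "gval m v i (2*n+1) \<le> gval m v i (2*n)" "gval m v i (2*n+1) \<le> gval m v i (2*n-1)"
    using i by (auto intro!: gval_antimono)
  ultimately have "3 * gval m v i (2*n+1) < 3/4 + \<delta>" by linarith
  \<comment> \<open>this bound suffices if \<delta> < 0, the bound from i \<notin> N11 if \<delta> \<ge> 0\<close>
  then show ?thesis using small by (cases "\<delta> \<ge> 0") linarith+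
qed

lemma N12_unassigned_bags_le_1:
  assumes "alg_reachable \<delta> n m v s" "i \<in> N12 \<delta> n m v" "asg s i = None" "k \<in> {1..n}"
  shows "bval m v i (bags s k) \<le> 1"
  using assms(1,3)
proof (induction rule: rtranclp_induct)
  case base
  then show ?case using assms(2,4) by (simp add: alg_init_def N12_def N1_def)
next
  case (step s s')
  have unassigned: "asg s i = None" using alg_step_asg_None[OF step.hyps(2) step.prems] .
  from step.hyps(2) show ?case
  proof (cases rule: alg_step_bags)
    case 1
    then show ?thesis using step.IH unassigned by simp
  next
    case (2 k' g)
    have i: "i \<in> {1..n}" using assms(2) by (simp add: N12_def N1_def)
    show ?thesis
    proof (cases "k = k'")
      case True
      have "bval m v i (bags s' k) \<le> bval m v i (bags s k) + gval m v i g"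
        using 2 True bval_insert_le[OF i] alg_reachable_bags[OF step.hyps(1)] by simp
      moreover have "bval m v i (bags s k) < 3/4 + \<delta>"
        using 2 True i unassigned by (auto simp: unassigned_agent_def)
      moreover have "gval m v i g \<le> gval m v i (2*n+1)"
        using 2 i by (intro gval_antimono) auto
      ultimately show ?thesis using N12_threshold_plus_gval_le_1[OF assms(2)] by linarith
    next
      case False
      then show ?thesis using 2 step.IH unassigned by simp
    qed
  qed
qed

lemma N12_assigned_at_end:
  assumes "\<delta> \<le> 1/4" "alg_final \<delta> n m v s" "i \<in> N12 \<delta> n m v"
  shows "asg s i \<noteq> None"
proof
  assume unassigned: "asg s i = None"
  have i: "i \<in> {1..n}" using assms(3) by (simp add: N12_def N1_def)
  have reach: "alg_reachable \<delta> n m v s" using assms(2) by (simp add: alg_final_def)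
  have "unassigned_agent n s i" using i unassigned by (simp add: unassigned_agent_def)
  then obtain k where k: "k \<in> {1..n}" "bval m v i (bags s k) < 3/4 + \<delta>"
    and cover: "{1..m} \<subseteq> (\<Union>k\<in>{1..n}. bags s k)"
    using alg_final_unassigned_agent[OF assms(2)] by blast
  have below_1: "bval m v i (bags s k) < 1" using k(2) assms(1) by linarith
  have "real n \<le> (\<Sum>k\<in>{1..n}. bval m v i (bags s k))"
    using n_le_sum_bval_cover[OF i _ cover] alg_reachable_bags[OF reach] by blast
  also have "\<dots> < (\<Sum>k\<in>{1..n}. 1)"
    using N12_unassigned_bags_le_1[OF reach assms(3) unassigned] k(1) below_1
    by (intro sum_strict_mono_ex1) auto
  finally show False by simp
qed

end

theorem lemma23:
  fixes \<delta> :: real and n m :: nat and v :: "nat \<Rightarrow> nat \<Rightarrow> real" and s :: alg_state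
  assumes "\<delta> \<le> 1/4"
    and "\<forall>i\<in>{1..n}. \<forall>j\<in>{1..m}. v i j \<ge> 0"
    and "ONI \<delta> n m v"
    and "real (card (N11 \<delta> n m v)) \<le> real n * (1/4 - \<delta>) / (1/4 + \<delta>/3)"
    and "alg_final \<delta> n m v s"
  shows "\<forall>i\<in>N12 \<delta> n m v. \<exists>k\<in>{1..n}. asg s i = Some k \<and>
           bval m v i (bags s k) \<ge> (3/4 + \<delta>) * MMS n m v i"
proof
  interpret ONI_instance \<delta> n m v using assms(2,3) by unfold_locales
  fix i assume N12: "i \<in> N12 \<delta> n m v"
  then have i: "i \<in> {1..n}" by (simp add: N12_def N1_def)
  obtain k where k: "asg s i = Some k"
    using N12_assigned_at_end[OF assms(1,5) N12] by blast
  have "k \<in> {1..n} \<and> 3/4 + \<delta> \<le> bval m v i (bags s k)"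
    using assms(5) i k by (intro alg_reachable_assigned_bag) (simp_all add: alg_final_def)
  then show "\<exists>k\<in>{1..n}. asg s i = Some k \<and> bval m v i (bags s k) \<ge> (3/4 + \<delta>) * MMS n m v i"
    using k MMS_eq_1[OF i] by auto
qed

end
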